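(* Let $q\in[0,1)$ and let $R$ be a matrix-valued rational function analytic at the origin. Suppose $R(z)=C(I_N-zA)^{-1}B=C'(I_{N'}-zA')^{-1}B'$ near the origin for two (not necessarily minimal) realizations. Then, near the origin, \[ C\prod_{j=0}^\infty\bigl(I_N-z(1-q)q^jA\bigr)^{-1}B=C'\prod_{j=0}^\infty\bigl(I_{N'}-z(1-q)q^jA'\bigr)^{-1}B' , \] i.e. the function $T(R)(z,q)=C\prod_{j=0}^\infty(I_N-z(1-q)q^jA)^{-1}B$ does not depend on the chosen realization.
   Context: Convention $q^0=1$. Matrices have compatible sizes: $C\in\mathbb C^{n\times N}$, $A\in\mathbb C^{N\times N}$, $B\in\mathbb C^{N\times m}$, similarly for the primed triple. *)

theory Defs
  imports "HOL-Analysis.Analysis"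
begin

definition cmat_scale :: "complex \<Rightarrow> complex^'c^'r \<Rightarrow> complex^'c^'r" where
  "cmat_scale z A = (\<chi> i j. z * A $ i $ j)"

definition resolv :: "complex \<Rightarrow> complex^'N^'N \<Rightarrow> complex^'N^'N" where
  "resolv w A = matrix_inv (mat 1 - cmat_scale w A)"

fun qpartial :: "real \<Rightarrow> complex^'N^'N \<Rightarrow> complex \<Rightarrow> nat \<Rightarrow> complex^'N^'N" where
  "qpartial q A z 0 = mat 1"
| "qpartial q A z (Suc M) =
     qpartial q A z M ** resolv (z * complex_of_real ((1 - q) * q ^ M)) A"

definition qinfprod :: "real \<Rightarrow> complex^'N^'N \<Rightarrow> complex \<Rightarrow> complex^'N^'N" where
  "qinfprod q A z = lim (qpartial q A z)"

end

theory Submission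
  imports Defs
begin

text \<open>By the resolvent identity
  \<open>(u - w) (I - u A)\<^sup>-\<^sup>1 (I - w A)\<^sup>-\<^sup>1 = u (I - u A)\<^sup>-\<^sup>1 - w (I - w A)\<^sup>-\<^sup>1\<close>,
  a product of resolvents at distinct nodes is a linear combination of single resolvents whose
  coefficients depend on the nodes only, not on \<open>A\<close>. Sandwiched between \<open>C\<close> and \<open>B\<close>, every
  partial product of \<open>T(R)(z, q)\<close> is therefore the same combination of values of \<open>R\<close> for both
  realizations. For small \<open>|z|\<close> the partial products converge, because
  \<open>\<parallel>(I - w A)\<^sup>-\<^sup>1 - I\<parallel> = O(|w|)\<close> and the nodes \<open>z (1 - q) q\<^sup>j\<close> are summable; so the
  limits agree as well.\<close>

lemma matrix_add_rdistrib: "(A + B) ** (C::'a::semiring_1^_^_) = A ** C + B ** C"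
  by (simp add: vec_eq_iff matrix_matrix_mult_def algebra_simps sum.distrib)

lemma matrix_diff_ldistrib: "(A::'a::ring_1^_^_) ** (B - C) = A ** B - A ** C"
  by (simp add: vec_eq_iff matrix_matrix_mult_def algebra_simps sum_subtractf)

lemma matrix_diff_rdistrib: "(A - B) ** (C::'a::ring_1^_^_) = A ** C - B ** C"
  by (simp add: vec_eq_iff matrix_matrix_mult_def algebra_simps sum_subtractf)

lemma sum_matrix_mul: "(\<Sum>s\<in>S. f s) ** (C::'a::semiring_1^_^_) = (\<Sum>s\<in>S. f s ** C)"
  by (induction S rule: infinite_finite_induct) (simp_all add: matrix_add_rdistrib)

lemma matrix_mul_sum: "(C::'a::semiring_1^_^_) ** (\<Sum>s\<in>S. f s) = (\<Sum>s\<in>S. C ** f s)"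
  by (induction S rule: infinite_finite_induct) (simp_all add: matrix_add_ldistrib)

lemma cmat_scale_nth [simp]: "cmat_scale a X $ i $ j = a * X $ i $ j"
  by (simp add: cmat_scale_def)

lemma cmat_scale_matrix_mul: "cmat_scale a X ** Y = cmat_scale a (X ** Y)"
  and matrix_mul_cmat_scale: "X ** cmat_scale a Y = cmat_scale a (X ** Y)"
  by (simp_all add: vec_eq_iff matrix_matrix_mult_def sum_distrib_left algebra_simps)

lemma cmat_scale_cmat_scale [simp]: "cmat_scale a (cmat_scale b X) = cmat_scale (a * b) X"
  and cmat_scale_one [simp]: "cmat_scale 1 X = X"
  and cmat_scale_zero [simp]: "cmat_scale 0 X = 0"
  by (simp_all add: vec_eq_iff algebra_simps)

lemma cmat_scale_sum_left: "cmat_scale (\<Sum>s\<in>S. c s) X = (\<Sum>s\<in>S. cmat_scale (c s) X)"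
  by (induction S rule: infinite_finite_induct) (simp_all add: vec_eq_iff algebra_simps)

lemma matrix_mul_sum_cmat_scale_mul:
  "C ** (\<Sum>s\<in>S. cmat_scale (c s) (X s)) ** B = (\<Sum>s\<in>S. cmat_scale (c s) (C ** X s ** B))"
  by (simp add: matrix_mul_sum sum_matrix_mul cmat_scale_matrix_mul matrix_mul_cmat_scale)

lemma matrix_inv_right: "invertible M \<Longrightarrow> M ** matrix_inv M = mat 1"
  and matrix_inv_left: "invertible M \<Longrightarrow> matrix_inv M ** M = mat 1"
  for M :: "'a::semiring_1^'n^'m"
  using someI_ex[of "\<lambda>N. M ** N = mat 1 \<and> N ** M = mat 1"]
  unfolding invertible_def matrix_inv_def by auto

lemma resolv_0 [simp]: "resolv 0 A = mat 1"
proof -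
  have "invertible (mat 1 - cmat_scale 0 A)"
    unfolding invertible_def by auto
  then show ?thesis
    using matrix_inv_left[of "mat 1 - cmat_scale 0 A"] by (simp add: resolv_def)
qed

lemma resolvent_identity:
  assumes u: "invertible (mat 1 - cmat_scale u A)" and w: "invertible (mat 1 - cmat_scale w A)"
  shows "cmat_scale (u - w) (resolv u A ** resolv w A)
           = cmat_scale u (resolv u A) - cmat_scale w (resolv w A)"
proof -
  let ?U = "mat 1 - cmat_scale u A" and ?W = "mat 1 - cmat_scale w A"
  have "cmat_scale (u - w) (mat 1) = cmat_scale u ?W - cmat_scale w ?U"
    by (simp add: vec_eq_iff mat_def algebra_simps)
  then have "cmat_scale (u - w) (resolv u A ** resolv w A)
      = cmat_scale u (resolv u A ** (?W ** resolv w A)) - cmat_scale w ((resolv u A ** ?U) ** resolv w A)"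
    by (metis (no_types, lifting) cmat_scale_matrix_mul matrix_diff_ldistrib matrix_diff_rdistrib
        matrix_mul_assoc matrix_mul_cmat_scale matrix_mul_lid)
  then show ?thesis
    using matrix_inv_left[OF u] matrix_inv_right[OF w] by (simp add: resolv_def)
qed

lemma sum_resolv_mul_resolv:
  assumes S: "finite S" "w \<notin> S"
    and inv: "\<And>u. u \<in> insert w S \<Longrightarrow> invertible (mat 1 - cmat_scale u A)"
  shows "(\<Sum>u\<in>S. cmat_scale (c u) (resolv u A)) ** resolv w A
       = (\<Sum>u\<in>insert w S. cmat_scale
            (if u = w then (\<Sum>v\<in>S. c v * w / (w - v)) else c u * u / (u - w)) (resolv u A))"
proof -
  have each: "cmat_scale (c u) (resolv u A) ** resolv w A
      = cmat_scale (c u * u / (u - w)) (resolv u A) + cmat_scale (c u * w / (w - u)) (resolv w A)"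
    if "u \<in> S" for u
  proof -
    have "u - w \<noteq> 0" using that S by auto
    then have "resolv u A ** resolv w A
        = cmat_scale (1 / (u - w)) (cmat_scale (u - w) (resolv u A ** resolv w A))"
      by simp
    also have "\<dots> = cmat_scale (u / (u - w)) (resolv u A) + cmat_scale (w / (w - u)) (resolv w A)"
      using \<open>u - w \<noteq> 0\<close> inv that
      by (simp add: resolvent_identity vec_eq_iff diff_divide_distrib minus_divide_right
          del: divide_minus_right)
    finally show ?thesis
      by (simp add: cmat_scale_matrix_mul vec_eq_iff algebra_simps)
  qed
  have "(\<Sum>u\<in>S. cmat_scale (c u) (resolv u A)) ** resolv w A
      = (\<Sum>u\<in>S. cmat_scale (c u * u / (u - w)) (resolv u A))
        + cmat_scale (\<Sum>v\<in>S. c v * w / (w - v)) (resolv w A)"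
    by (simp add: sum_matrix_mul each sum.distrib cmat_scale_sum_left)
  also have "(\<Sum>u\<in>S. cmat_scale (c u * u / (u - w)) (resolv u A))
      = (\<Sum>u\<in>S. cmat_scale
            (if u = w then (\<Sum>v\<in>S. c v * w / (w - v)) else c u * u / (u - w)) (resolv u A))"
    using S by (intro sum.cong) auto
  finally show ?thesis
    using S by (simp add: add.commute)
qed

fun resolv_prod :: "(nat \<Rightarrow> complex) \<Rightarrow> complex^'n^'n \<Rightarrow> nat \<Rightarrow> complex^'n^'n" where
  "resolv_prod w A 0 = mat 1"
| "resolv_prod w A (Suc M) = resolv_prod w A M ** resolv (w M) A"

lemma qpartial_eq_resolv_prod:
  "qpartial q A z = resolv_prod (\<lambda>j. z * complex_of_real ((1 - q) * q ^ j)) A"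
proof
  show "qpartial q A z M = resolv_prod (\<lambda>j. z * complex_of_real ((1 - q) * q ^ j)) A M" for M
    by (induction M) simp_all
qed

text \<open>The coefficients of the partial fraction expansion of \<open>resolv_prod w A M\<close> over the
  nodes \<open>insert 0 (w ` {..<M})\<close>, following \<open>sum_resolv_mul_resolv\<close> step by step. They do
  not involve the matrix, which is why the expansion transfers between realizations. A zero node
  contributes the factor \<open>mat 1\<close> and is skipped, so only nonzero nodes need to be distinct
  (for \<open>q = 0\<close> all \<open>q\<close>-nodes but the first vanish).\<close>
fun resolv_prod_coeff :: "(nat \<Rightarrow> complex) \<Rightarrow> nat \<Rightarrow> complex \<Rightarrow> complex" where
  "resolv_prod_coeff w 0 u = (if u = 0 then 1 else 0)"
| "resolv_prod_coeff w (Suc M) u =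
     (if w M = 0 then resolv_prod_coeff w M u
      else if u = w M then (\<Sum>v\<in>insert 0 (w ` {..<M}). resolv_prod_coeff w M v * w M / (w M - v))
      else resolv_prod_coeff w M u * u / (u - w M))"

lemma resolv_prod_partial_fractions:
  assumes new: "\<And>j. j < M \<Longrightarrow> w j \<noteq> 0 \<Longrightarrow> w j \<notin> w ` {..<j}"
    and inv: "\<And>j. j < M \<Longrightarrow> invertible (mat 1 - cmat_scale (w j) A)"
  shows "resolv_prod w A M
           = (\<Sum>u\<in>insert 0 (w ` {..<M}). cmat_scale (resolv_prod_coeff w M u) (resolv u A))"
  using assms
proof (induction M)
  case 0
  then show ?case by simp
next
  case (Suc M)
  let ?S = "insert 0 (w ` {..<M})"
  have IH: "resolv_prod w A M = (\<Sum>u\<in>?S. cmat_scale (resolv_prod_coeff w M u) (resolv u A))"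
    using Suc by simp
  show ?case
  proof (cases "w M = 0")
    case True
    then have "insert 0 (w ` {..<Suc M}) = ?S"
      by (auto simp: lessThan_Suc)
    with True IH show ?thesis by simp
  next
    case False
    have "w M \<notin> ?S" using False Suc.prems(1)[of M] by auto
    moreover have "invertible (mat 1 - cmat_scale u A)" if "u \<in> insert (w M) ?S" for u
      using that Suc.prems(2) unfolding invertible_def by auto
    moreover have "insert 0 (w ` {..<Suc M}) = insert (w M) ?S"
      by (auto simp: lessThan_Suc)
    ultimately show ?thesis
      using False by (simp add: IH sum_resolv_mul_resolv del: insert_iff)
  qed
qed

lemma matrix_sandwich_resolv_prod_eq:
  fixes A :: "complex^'N^'N" and A' :: "complex^'M^'M"
  assumes new: "\<And>j. j < M \<Longrightarrow> w j \<noteq> 0 \<Longrightarrow> w j \<notin> w ` {..<j}"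
    and inv: "\<And>j. j < M \<Longrightarrow> invertible (mat 1 - cmat_scale (w j) A)"
    and inv': "\<And>j. j < M \<Longrightarrow> invertible (mat 1 - cmat_scale (w j) A')"
    and eq: "\<And>u. u \<in> insert 0 (w ` {..<M}) \<Longrightarrow> C ** resolv u A ** B = C' ** resolv u A' ** B'"
  shows "C ** resolv_prod w A M ** B = C' ** resolv_prod w A' M ** B'"
proof -
  let ?S = "insert 0 (w ` {..<M})"
  have "resolv_prod w A M = (\<Sum>u\<in>?S. cmat_scale (resolv_prod_coeff w M u) (resolv u A))"
    using new inv by (rule resolv_prod_partial_fractions)
  moreover have "resolv_prod w A' M = (\<Sum>u\<in>?S. cmat_scale (resolv_prod_coeff w M u) (resolv u A'))"
    using new inv' by (rule resolv_prod_partial_fractions)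
  moreover have "(\<Sum>u\<in>?S. cmat_scale (resolv_prod_coeff w M u) (C ** resolv u A ** B))
      = (\<Sum>u\<in>?S. cmat_scale (resolv_prod_coeff w M u) (C' ** resolv u A' ** B'))"
    using eq by (intro sum.cong) auto
  ultimately show ?thesis
    by (simp only: matrix_mul_sum_cmat_scale_mul)
qed

lemma norm_vec_le_sum: "norm (x::'a::real_normed_vector^'n) \<le> (\<Sum>i\<in>UNIV. norm (x $ i))"
  by (simp add: norm_vec_def L2_set_le_sum)

lemma norm_matrix_nth_le: "norm (X $ i $ j) \<le> norm (X::'a::real_normed_vector^'n^'m)"
  by (metis Finite_Cartesian_Product.norm_nth_le order_trans)

lemma norm_matrix_mul_le:
  fixes X :: "'k::real_normed_algebra_1^'b^'a" and Y :: "'k^'c^'b"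
  shows "norm (X ** Y) \<le> real (CARD('a) * CARD('b) * CARD('c)) * norm X * norm Y"
proof -
  have entry: "norm ((X ** Y) $ i $ j) \<le> real CARD('b) * norm X * norm Y" for i j
  proof -
    have "norm ((X ** Y) $ i $ j) \<le> (\<Sum>k\<in>UNIV. norm (X $ i $ k) * norm (Y $ k $ j))"
      unfolding matrix_matrix_mult_def
      by (simp add: order_trans[OF norm_sum sum_mono[OF norm_mult_ineq]])
    also have "\<dots> \<le> (\<Sum>k\<in>(UNIV::'b set). norm X * norm Y)"
      by (intro sum_mono mult_mono norm_matrix_nth_le) auto
    finally show ?thesis by simp
  qed
  have "norm (X ** Y) \<le> (\<Sum>i\<in>UNIV. \<Sum>j\<in>UNIV. norm ((X ** Y) $ i $ j))"
    by (rule order_trans[OF norm_vec_le_sum sum_mono[OF norm_vec_le_sum]])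
  also have "\<dots> \<le> (\<Sum>i\<in>(UNIV::'a set). \<Sum>j\<in>(UNIV::'c set). real CARD('b) * norm X * norm Y)"
    by (intro sum_mono entry)
  finally show ?thesis by (simp add: mult_ac)
qed

lemma norm_matrix_vector_mul_le:
  fixes X :: "'k::real_normed_algebra_1^'b^'a" and x :: "'k^'b"
  shows "norm (X *v x) \<le> real (CARD('a) * CARD('b)) * norm X * norm x"
proof -
  have entry: "norm ((X *v x) $ i) \<le> real CARD('b) * norm X * norm x" for i
  proof -
    have "norm ((X *v x) $ i) \<le> (\<Sum>k\<in>UNIV. norm (X $ i $ k) * norm (x $ k))"
      unfolding matrix_vector_mult_def
      by (simp add: order_trans[OF norm_sum sum_mono[OF norm_mult_ineq]])
    also have "\<dots> \<le> (\<Sum>k\<in>(UNIV::'b set). norm X * norm x)"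
      by (intro sum_mono mult_mono) (auto simp: norm_matrix_nth_le Finite_Cartesian_Product.norm_nth_le)
    finally show ?thesis by simp
  qed
  have "norm (X *v x) \<le> (\<Sum>i\<in>(UNIV::'a set). real CARD('b) * norm X * norm x)"
    by (rule order_trans[OF norm_vec_le_sum sum_mono[OF entry]])
  then show ?thesis by simp
qed

lemma norm_cmat_scale: "norm (cmat_scale w X) = norm w * norm X"
proof -
  have "norm (cmat_scale w X $ i) = norm w * norm (X $ i)" for i
    by (simp add: norm_vec_def norm_mult L2_set_right_distrib)
  then show ?thesis
    by (simp add: norm_vec_def[of "cmat_scale w X"] norm_vec_def[of X] L2_set_right_distrib)
qed

lemma invertible_mat_1_minus:
  fixes X :: "complex^'n^'n"
  assumes "real (CARD('n) * CARD('n)) * norm X < 1"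
  shows "invertible (mat 1 - X)"
proof -
  have "x = 0" if "(mat 1 - X) *v x = 0" for x
  proof -
    from that have "x = X *v x"
      by (simp add: matrix_vector_mult_diff_rdistrib)
    then have "norm x \<le> real (CARD('n) * CARD('n)) * norm X * norm x"
      by (metis norm_matrix_vector_mul_le)
    with assms show "x = 0"
      by (smt (verit, best) mult_le_cancel_right1 norm_eq_zero norm_ge_zero)
  qed
  then show ?thesis
    using invertible_left_inverse matrix_left_invertible_ker by blast
qed

lemma norm_matrix_inv_mat_1_minus_le:
  fixes X :: "complex^'n^'n"
  assumes small: "real CARD('n) ^ 3 * norm X \<le> 1/2"
  shows "norm (matrix_inv (mat 1 - X) - mat 1)
           \<le> 2 * real CARD('n) ^ 3 * norm (mat 1 :: complex^'n^'n) * norm X"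
proof -
  define K where "K = real CARD('n) ^ 3"
  define R where "R = matrix_inv (mat 1 - X)"
  have "real (CARD('n) * CARD('n)) * norm X \<le> K * norm X"
    unfolding K_def by (intro mult_right_mono) (auto simp: power3_eq_cube)
  with small have "real (CARD('n) * CARD('n)) * norm X < 1"
    unfolding K_def by linarith
  then have "R ** (mat 1 - X) = mat 1"
    unfolding R_def by (intro matrix_inv_left invertible_mat_1_minus)
  then have "R - mat 1 = R ** X"
    by (simp add: matrix_diff_ldistrib eq_diff_eq diff_eq_eq add.commute)
  then have RX: "norm (R - mat 1) \<le> K * norm X * norm R"
    using norm_matrix_mul_le[of R X] by (simp add: K_def power3_eq_cube mult_ac)
  have "norm R \<le> norm (mat 1 :: complex^'n^'n) + norm (R - mat 1)"
    by (metis add.commute norm_triangle_sub)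
  also have "\<dots> \<le> norm (mat 1 :: complex^'n^'n) + norm R / 2"
    using RX small mult_right_mono[OF small, of "norm R"] unfolding K_def by simp
  finally have "norm R \<le> 2 * norm (mat 1 :: complex^'n^'n)"
    by simp
  then have "K * norm X * norm R \<le> K * norm X * (2 * norm (mat 1 :: complex^'n^'n))"
    unfolding K_def by (intro mult_left_mono) auto
  with RX show ?thesis
    unfolding R_def K_def by (simp add: mult_ac)
qed

lemma resolv_near_identity:
  fixes A :: "complex^'n^'n"
  obtains \<delta> L where "\<delta> > 0"
    and "\<And>w. norm w < \<delta> \<Longrightarrow> invertible (mat 1 - cmat_scale w A)"
    and "\<And>w. norm w < \<delta> \<Longrightarrow> norm (resolv w A - mat 1) \<le> L * norm w"
proof
  define K where "K = real CARD('n) ^ 3"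
  have K: "K \<ge> 1"
    unfolding K_def by simp
  have A: "norm A + 1 > 0"
    by (smt (verit) norm_ge_zero)
  with K have pos: "2 * K * (norm A + 1) > 0"
    by simp
  then show "1 / (2 * K * (norm A + 1)) > 0"
    by simp
  fix w :: complex
  assume w: "norm w < 1 / (2 * K * (norm A + 1))"
  have "K * norm (cmat_scale w A) \<le> K * (norm w * (norm A + 1))"
    using K by (simp add: norm_cmat_scale mult_left_mono)
  also have "\<dots> \<le> K * (1 / (2 * K * (norm A + 1)) * (norm A + 1))"
    using K w by (intro mult_left_mono mult_right_mono) auto
  also have "\<dots> = 1/2"
    using K A by simp
  finally have small: "K * norm (cmat_scale w A) \<le> 1/2" .
  have "real (CARD('n) * CARD('n)) * norm (cmat_scale w A) \<le> K * norm (cmat_scale w A)"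
    unfolding K_def by (intro mult_right_mono) (auto simp: power3_eq_cube)
  with small show "invertible (mat 1 - cmat_scale w A)"
    by (intro invertible_mat_1_minus) linarith
  show "norm (resolv w A - mat 1) \<le> (2 * K * norm (mat 1 :: complex^'n^'n) * norm A) * norm w"
    using norm_matrix_inv_mat_1_minus_le[of "cmat_scale w A"] small
    unfolding resolv_def K_def by (simp add: norm_cmat_scale mult_ac)
qed

lemma convergent_if_norm_diff_le:
  fixes P :: "nat \<Rightarrow> 'a::banach"
  assumes diff: "\<And>n. norm (P (Suc n) - P n) \<le> b n * norm (P n)"
    and b: "\<And>n. 0 \<le> b n" "summable b"
  shows "convergent P"
proof -
  \<comment> \<open>\<open>1 + b \<le> exp b\<close> bounds the sequence, after which the differences are dominated by \<open>b\<close>.\<close>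
  have growth: "norm (P n) \<le> norm (P 0) * exp (\<Sum>k<n. b k)" for n
  proof (induction n)
    case 0
    then show ?case by simp
  next
    case (Suc n)
    have "norm (P (Suc n)) \<le> norm (P n) * (1 + b n)"
      using diff[of n] norm_triangle_sub[of "P (Suc n)" "P n"] by (simp add: algebra_simps)
    also have "\<dots> \<le> norm (P 0) * exp (\<Sum>k<n. b k) * exp (b n)"
      using Suc.IH b(1)[of n] by (intro mult_mono) auto
    finally show ?case
      by (simp add: exp_add mult.assoc)
  qed
  define B where "B = norm (P 0) * exp (suminf b)"
  have bounded: "norm (P n) \<le> B" for n
    using growth[of n] sum_le_suminf[OF b(2), of "{..<n}"] b(1) unfolding B_def
    by (smt (verit) exp_le_cancel_iff finite_lessThan mult_left_mono norm_ge_zero)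
  have "summable (\<lambda>n. norm (P (Suc n) - P n))"
  proof (rule summable_comparison_test'[where N = 0])
    show "summable (\<lambda>n. B * b n)"
      using b(2) by (rule summable_mult)
    show "norm (norm (P (Suc n) - P n)) \<le> B * b n" for n
      using diff[of n] b(1)[of n] bounded[of n]
      by (smt (verit) mult.commute mult_left_mono norm_ge_zero real_norm_def)
  qed
  then have "summable (\<lambda>n. P (Suc n) - P n)"
    by (rule summable_norm_cancel)
  then have "convergent (\<lambda>n. P n - P 0)"
    by (simp add: summable_iff_convergent sum_lessThan_telescope)
  then show ?thesis
    by (simp add: convergent_diff_const_right_iff)
qed

lemma convergent_matrix_prod:
  fixes P R :: "nat \<Rightarrow> complex^'n^'n"
  assumes P: "\<And>n. P (Suc n) = P n ** R n" and R: "summable (\<lambda>n. norm (R n - mat 1))"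
  shows "convergent P"
proof (rule convergent_if_norm_diff_le)
  let ?K = "real CARD('n) ^ 3"
  show "norm (P (Suc n) - P n) \<le> ?K * norm (R n - mat 1) * norm (P n)" for n
    using norm_matrix_mul_le[of "P n" "R n - mat 1"]
    by (simp add: P matrix_diff_ldistrib power3_eq_cube mult_ac)
  show "summable (\<lambda>n. ?K * norm (R n - mat 1))"
    using R by (rule summable_mult)
qed simp

lemma tendsto_matrix_sandwich:
  fixes f :: "nat \<Rightarrow> complex^'b^'a" and C :: "complex^'a^'c" and B :: "complex^'d^'b"
  assumes "f \<longlonglongrightarrow> L"
  shows "(\<lambda>n. C ** f n ** B) \<longlonglongrightarrow> C ** L ** B"
proof (intro vec_tendstoI)
  fix i j
  have "\<And>k l. (\<lambda>n. f n $ k $ l) \<longlonglongrightarrow> L $ k $ l"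
    by (intro tendsto_vec_nth assms)
  show "(\<lambda>n. (C ** f n ** B) $ i $ j) \<longlonglongrightarrow> (C ** L ** B) $ i $ j"
    unfolding matrix_matrix_mult_def by (simp, intro tendsto_intros \<open>\<And>k l. _\<close>)
qed

lemma norm_q_node:
  assumes "0 \<le> q" "q < 1"
  shows "norm (z * complex_of_real ((1 - q) * q ^ j)) = norm z * (1 - q) * q ^ j"
  using assms by (simp only: norm_mult norm_of_real abs_of_nonneg mult.assoc) simp

lemma norm_q_node_le:
  assumes "0 \<le> q" "q < 1"
  shows "norm (z * complex_of_real ((1 - q) * q ^ j)) \<le> norm z"
proof -
  have "(1 - q) * q ^ j \<le> 1"
    using assms by (intro mult_le_one) (auto simp: power_le_one)
  then show ?thesis
    unfolding norm_q_node[OF assms] by (simp add: mult.assoc mult_left_le)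
qed

lemma summable_norm_q_node:
  assumes "0 \<le> q" "q < 1"
  shows "summable (\<lambda>j. norm (z * complex_of_real ((1 - q) * q ^ j)))"
  unfolding norm_q_node[OF assms] using assms by (simp add: summable_geometric summable_mult)

lemma q_node_new:
  assumes q: "0 \<le> q" "q < 1" and nz: "z * complex_of_real ((1 - q) * q ^ j) \<noteq> 0"
  shows "z * complex_of_real ((1 - q) * q ^ j) \<notin> (\<lambda>i. z * complex_of_real ((1 - q) * q ^ i)) ` {..<j}"
proof
  assume "z * complex_of_real ((1 - q) * q ^ j) \<in> (\<lambda>i. z * complex_of_real ((1 - q) * q ^ i)) ` {..<j}"
  then obtain i where "i < j"
    and eq: "z * complex_of_real ((1 - q) * q ^ j) = z * complex_of_real ((1 - q) * q ^ i)"
    by auto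
  from nz have "z \<noteq> 0" "q \<noteq> 0"
    using \<open>i < j\<close> by auto
  with q \<open>i < j\<close> have "q ^ j < q ^ i"
    by (intro power_strict_decreasing) auto
  moreover from eq \<open>z \<noteq> 0\<close> have "(1 - q) * q ^ j = (1 - q) * q ^ i"
    by (metis mult_left_cancel of_real_eq_iff)
  ultimately show False
    using q by simp
qed

lemma qpartial_convergent:
  fixes A :: "complex^'n^'n"
  assumes q: "0 \<le> q" "q < 1" and z: "norm z < \<delta>"
    and resolv_bound: "\<And>u. norm u < \<delta> \<Longrightarrow> norm (resolv u A - mat 1) \<le> L * norm u"
  shows "convergent (qpartial q A z)"
proof (rule convergent_matrix_prod)
  let ?w = "\<lambda>j. z * complex_of_real ((1 - q) * q ^ j)"
  show "qpartial q A z (Suc j) = qpartial q A z j ** resolv (?w j) A" for j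
    by simp
  show "summable (\<lambda>j. norm (resolv (?w j) A - mat 1))"
  proof (rule summable_comparison_test'[where N = 0])
    show "summable (\<lambda>j. L * norm (?w j))"
      using summable_norm_q_node[OF q] by (rule summable_mult)
    show "norm (norm (resolv (?w j) A - mat 1)) \<le> L * norm (?w j)" for j
      using resolv_bound norm_q_node_le[OF q, of z j] z by simp
  qed
qed

lemma qinfprod_sandwich_eq:
  fixes A :: "complex^'N^'N" and A' :: "complex^'M^'M"
  assumes q: "0 \<le> q" "q < 1"
    and conv: "convergent (qpartial q A z)" "convergent (qpartial q A' z)"
    and inv: "\<And>u. norm u \<le> norm z \<Longrightarrow> invertible (mat 1 - cmat_scale u A)"
    and inv': "\<And>u. norm u \<le> norm z \<Longrightarrow> invertible (mat 1 - cmat_scale u A')"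
    and eq: "\<And>u. norm u \<le> norm z \<Longrightarrow> C ** resolv u A ** B = C' ** resolv u A' ** B'"
  shows "C ** qinfprod q A z ** B = C' ** qinfprod q A' z ** B'"
proof -
  let ?w = "\<lambda>j. z * complex_of_real ((1 - q) * q ^ j)"
  have "C ** resolv_prod ?w A M ** B = C' ** resolv_prod ?w A' M ** B'" for M
  proof (rule matrix_sandwich_resolv_prod_eq)
    show "?w j \<notin> ?w ` {..<j}" if "?w j \<noteq> 0" for j
      using q_node_new[OF q that] .
    show "invertible (mat 1 - cmat_scale (?w j) A)" "invertible (mat 1 - cmat_scale (?w j) A')" for j
      using inv inv' norm_q_node_le[OF q] by blast+
    show "C ** resolv u A ** B = C' ** resolv u A' ** B'" if "u \<in> insert 0 (?w ` {..<M})" for u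
      using that eq eq[of 0] norm_q_node_le[OF q] by auto
  qed
  then have "(\<lambda>M. C ** qpartial q A z M ** B) = (\<lambda>M. C' ** qpartial q A' z M ** B')"
    by (simp add: qpartial_eq_resolv_prod)
  moreover have "(\<lambda>M. C ** qpartial q A z M ** B) \<longlonglongrightarrow> C ** qinfprod q A z ** B"
    using conv(1) unfolding qinfprod_def convergent_LIMSEQ_iff by (rule tendsto_matrix_sandwich)
  moreover have "(\<lambda>M. C' ** qpartial q A' z M ** B') \<longlonglongrightarrow> C' ** qinfprod q A' z ** B'"
    using conv(2) unfolding qinfprod_def convergent_LIMSEQ_iff by (rule tendsto_matrix_sandwich)
  ultimately show ?thesis
    using LIMSEQ_unique by metis
qed

theorem proposition7p1:
  fixes q :: real
    and C :: "complex^'N^'n" and A :: "complex^'N^'N" and B :: "complex^'m^'N"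
    and C' :: "complex^'M^'n" and A' :: "complex^'M^'M" and B' :: "complex^'m^'M"
  assumes "0 \<le> q" and "q < 1"
    and "\<exists>e>0. \<forall>z. norm z < e \<longrightarrow>
           C ** resolv z A ** B = C' ** resolv z A' ** B'"
  shows "\<exists>e>0. \<forall>z. norm z < e \<longrightarrow>
           convergent (qpartial q A z) \<and> convergent (qpartial q A' z) \<and>
           C ** qinfprod q A z ** B = C' ** qinfprod q A' z ** B'"
proof -
  obtain e where "e > 0" and realizations:
    "\<And>z. norm z < e \<Longrightarrow> C ** resolv z A ** B = C' ** resolv z A' ** B'"
    using assms(3) by blast
  obtain \<delta> L where "\<delta> > 0" and inv: "\<And>w. norm w < \<delta> \<Longrightarrow> invertible (mat 1 - cmat_scale w A)"
    and bound: "\<And>w. norm w < \<delta> \<Longrightarrow> norm (resolv w A - mat 1) \<le> L * norm w"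
    using resolv_near_identity[of A] by blast
  obtain \<delta>' L' where "\<delta>' > 0" and inv': "\<And>w. norm w < \<delta>' \<Longrightarrow> invertible (mat 1 - cmat_scale w A')"
    and bound': "\<And>w. norm w < \<delta>' \<Longrightarrow> norm (resolv w A' - mat 1) \<le> L' * norm w"
    using resolv_near_identity[of A'] by blast
  define r where "r = min e (min \<delta> \<delta>')"
  have "convergent (qpartial q A z) \<and> convergent (qpartial q A' z) \<and>
      C ** qinfprod q A z ** B = C' ** qinfprod q A' z ** B'" if z: "norm z < r" for z
  proof -
    have conv: "convergent (qpartial q A z)" "convergent (qpartial q A' z)"
      using qpartial_convergent[OF assms(1,2), of z] bound bound' z unfolding r_def by auto
    moreover have "C ** qinfprod q A z ** B = C' ** qinfprod q A' z ** B'"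
      by (rule qinfprod_sandwich_eq[OF assms(1,2) conv])
        (use z inv inv' realizations in \<open>auto simp: r_def\<close>)
    ultimately show ?thesis
      by blast
  qed
  moreover have "r > 0"
    unfolding r_def using \<open>e > 0\<close> \<open>\<delta> > 0\<close> \<open>\<delta>' > 0\<close> by simp
  ultimately show ?thesis
    by blast
qed

end
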